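(* Let $V$ be a finite-dimensional complex vector space with a Hermitian inner product, $\mathbf G$ a finite group of unitary transformations of $V$, $\mathbf x_0\in V$ a unit vector with full orbit under $\mathbf G$, $\{I\}=\mathbf G_0<\cdots<\mathbf G_m=\mathbf G$ a subgroup sequence, and $\operatorname{CL}(\mathbf G_k/\mathbf G_{k-1})$ ($1\le k\le m$) coset leader sets. If for every $k$ with $1\le k<m$ every induced coset leader in $\operatorname{CL}(\mathbf G/\mathbf G_k)$ is minimal, then the subgroup decoding algorithm decodes correctly with some noise.
   Context: Full orbit: $|\mathbf G\mathbf x_0|=|\mathbf G|$; then $\operatorname{Stab}_{\mathbf G}(\mathbf x_0)=\{I\}$. $\operatorname{CL}(\mathbf G_k/\mathbf G_{k-1})$ is a set of representatives of the left cosets of $\mathbf G_{k-1}$ in $\mathbf G_k$ containing $I$; induced coset leaders $\operatorname{CL}(\mathbf G_l/\mathbf G_k)=\{c_l\cdots c_{k+1}:c_i\in\operatorname{CL}(\mathbf G_i/\mathbf G_{i-1})\}$. Subgroup decoding algorithm: given $\mathbf r$, set $\mathbf r_0=\mathbf r$; for $k=1,\dots,m$ choose $d_k\in\operatorname{CL}(\mathbf G_k/\mathbf G_{k-1})$ minimizing $\|a\mathbf r_{k-1}-\mathbf x_0\|$ over $a\in\operatorname{CL}(\mathbf G_k/\mathbf G_{k-1})$ (ties broken by a fixed ordering), set $\mathbf r_k=d_k\mathbf r_{k-1}$; output $g'=d_m\cdots d_1$. It decodes correctly with some noise if there is $\delta>0$ such that for all $g\in\mathbf G$ and $\mathbf r$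 with $\|\mathbf r-g^{-1}\mathbf x_0\|<\delta$ the output is $g$. For a subgroup $H$, $\operatorname{FR}(H)=\{\mathbf x:\|\mathbf x-\mathbf x_0\|<\|h\mathbf x-\mathbf x_0\|\ \forall h\in H\setminus\operatorname{Stab}_H(\mathbf x_0)\}$. For $H\le K$, a coset representative $c$ of $H$ in $K$ is minimal if $\mathbf x_0\in c(\operatorname{FR}(H))$. *)

theory Defs
  imports "HOL-Analysis.Analysis"
begin

type_synonym 'n cmat = "complex ^ 'n ^ 'n"
type_synonym 'n cvec = "complex ^ 'n"

definition unitary_mat :: "'n::finite cmat \<Rightarrow> bool" where
  "unitary_mat U \<longleftrightarrow> (\<forall>x. norm (U *v x) = norm x)"

definition mat_group :: "'n::finite cmat set \<Rightarrow> bool" where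
  "mat_group G \<longleftrightarrow> mat 1 \<in> G \<and> (\<forall>g\<in>G. \<forall>h\<in>G. g ** h \<in> G)
     \<and> (\<forall>g\<in>G. \<exists>h\<in>G. h ** g = mat 1 \<and> g ** h = mat 1)"

definition mat_subgroup :: "'n::finite cmat set \<Rightarrow> 'n cmat set \<Rightarrow> bool" where
  "mat_subgroup H G \<longleftrightarrow> H \<subseteq> G \<and> mat_group H"

definition Stab :: "'n::finite cmat set \<Rightarrow> 'n cvec \<Rightarrow> 'n cmat set" where
  "Stab H x0 = {h \<in> H. h *v x0 = x0}"

definition coset_leaders :: "'n::finite cmat set \<Rightarrow> 'n cmat set \<Rightarrow> 'n cmat set \<Rightarrow> bool" where
  "coset_leaders C K H \<longleftrightarrow> C \<subseteq> K \<and> mat 1 \<in> C \<and>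
     (\<forall>g\<in>K. \<exists>!c. c \<in> C \<and> (\<exists>h\<in>H. g = c ** h))"

text \<open>Induced coset leaders CL(G_j/G_k) = {c_j ... c_(k+1)} (for j \<le> k this is {I}).\<close>
fun induced_CL :: "(nat \<Rightarrow> 'n::finite cmat set) \<Rightarrow> nat \<Rightarrow> nat \<Rightarrow> 'n cmat set" where
  "induced_CL CL k 0 = {mat 1}"
| "induced_CL CL k (Suc j) = (if Suc j \<le> k then {mat 1}
     else {c ** d | c d. c \<in> CL (Suc j) \<and> d \<in> induced_CL CL k j})"

definition FR :: "'n::finite cmat set \<Rightarrow> 'n cvec \<Rightarrow> 'n cvec set" where
  "FR H x0 = {x. \<forall>h \<in> H - Stab H x0. norm (x - x0) < norm (h *v x - x0)}"

definition minimal_rep :: "'n::finite cmat set \<Rightarrow> 'n cvec \<Rightarrow> 'n cmat \<Rightarrow> bool" where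
  "minimal_rep H x0 c \<longleftrightarrow> x0 \<in> (\<lambda>x. c *v x) ` FR H x0"

text \<open>One step of the algorithm: the element of CL k minimizing the distance
  (ties broken by the fixed ranking rk k, which is injective on CL k).\<close>
definition dec_step :: "(nat \<Rightarrow> 'n::finite cmat set) \<Rightarrow> (nat \<Rightarrow> 'n cmat \<Rightarrow> nat) \<Rightarrow> 'n cvec
     \<Rightarrow> nat \<Rightarrow> 'n cvec \<Rightarrow> 'n cmat" where
  "dec_step CL rk x0 k r = (THE d. d \<in> CL k \<and> (\<forall>a \<in> CL k.
      norm (d *v r - x0) < norm (a *v r - x0) \<or>
      (norm (d *v r - x0) = norm (a *v r - x0) \<and> rk k d \<le> rk k a)))"

fun dec_iter :: "(nat \<Rightarrow> 'n::finite cmat set) \<Rightarrow> (nat \<Rightarrow> 'n cmat \<Rightarrow> nat) \<Rightarrow> 'n cvec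
     \<Rightarrow> nat \<Rightarrow> 'n cvec \<Rightarrow> 'n cvec \<times> 'n cmat" where
  "dec_iter CL rk x0 0 r = (r, mat 1)"
| "dec_iter CL rk x0 (Suc k) r = (let (r', g) = dec_iter CL rk x0 k r;
       d = dec_step CL rk x0 (Suc k) r' in (d *v r', d ** g))"

definition subgroup_decode :: "(nat \<Rightarrow> 'n::finite cmat set) \<Rightarrow> (nat \<Rightarrow> 'n cmat \<Rightarrow> nat) \<Rightarrow> 'n cvec
     \<Rightarrow> nat \<Rightarrow> 'n cvec \<Rightarrow> 'n cmat" where
  "subgroup_decode CL rk x0 m r = snd (dec_iter CL rk x0 m r)"

definition decodes_correctly_with_noise :: "'n::finite cmat set \<Rightarrow> (nat \<Rightarrow> 'n cmat set)
     \<Rightarrow> (nat \<Rightarrow> 'n cmat \<Rightarrow> nat) \<Rightarrow> 'n cvec \<Rightarrow> nat \<Rightarrow> bool" where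
  "decodes_correctly_with_noise G CL rk x0 m \<longleftrightarrow>
     (\<exists>\<delta>>0. \<forall>g\<in>G. \<forall>r. norm (r - matrix_inv g *v x0) < \<delta> \<longrightarrow>
        subgroup_decode CL rk x0 m r = g)"

end

theory Submission
  imports Defs
begin

text \<open>Write g = c_m \<cdots> c_1 with c_k \<in> CL(G_k/G_{k-1}). After k - 1 correct steps on the noiseless
  word g\<inverse> x0, the leader c_k maps the current word to e\<inverse> x0 with e = c_m \<cdots> c_{k+1}. Minimality of e
  puts e\<inverse> x0 in the fundamental region of G_k, and every other leader has the form h c_k with
  h \<in> G_k, h x0 \<noteq> x0 (full orbit), so it lands strictly farther from x0. Since G is finite, two
  distinct distances \<parallel>u x0 - x0\<parallel> (u \<in> G) differ by at least some 2\<delta> > 0, while the unitary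
  steps keep noise of size < \<delta> below \<delta>; hence every step still picks c_k.\<close>

lemma mat_group_inv:
  assumes "mat_group G" "g \<in> G"
  shows "matrix_inv g \<in> G" "g ** matrix_inv g = mat 1" "matrix_inv g ** g = mat 1"
proof -
  obtain h where h: "h \<in> G" "h ** g = mat 1" "g ** h = mat 1"
    using assms unfolding mat_group_def by blast
  have "matrix_inv g = h"
    unfolding matrix_inv_def
  proof (rule some_equality)
    show "g ** h = mat 1 \<and> h ** g = mat 1" using h by simp
  next
    fix h' assume "g ** h' = mat 1 \<and> h' ** g = mat 1"
    then show "h' = h" by (metis h(2) matrix_mul_assoc matrix_mul_rid)
  qed
  then show "matrix_inv g \<in> G" "g ** matrix_inv g = mat 1" "matrix_inv g ** g = mat 1"
    using h by auto
qed

fun leader_prod :: "(nat \<Rightarrow> 'n::finite cmat) \<Rightarrow> nat \<Rightarrow> nat \<Rightarrow> 'n cmat" where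
  "leader_prod c k 0 = mat 1"
| "leader_prod c k (Suc j) = (if Suc j \<le> k then mat 1 else c (Suc j) ** leader_prod c k j)"

lemma leader_prod_trivial: "j \<le> k \<Longrightarrow> leader_prod c k j = mat 1"
  by (induction j) auto

lemma leader_prod_split: "k \<le> j \<Longrightarrow> leader_prod c 0 j = leader_prod c k j ** leader_prod c 0 k"
proof (induction j)
  case (Suc j)
  then show ?case by (cases "k = Suc j") (simp_all add: matrix_mul_assoc)
qed simp

lemma leader_prod_cong: "(\<And>i. i \<le> j \<Longrightarrow> c i = c' i) \<Longrightarrow> leader_prod c k j = leader_prod c' k j"
  by (induction j) auto

lemma leader_prod_mem:
  "mat_group G \<Longrightarrow> (\<And>i. k < i \<Longrightarrow> i \<le> j \<Longrightarrow> c i \<in> G) \<Longrightarrow> leader_prod c k j \<in> G"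
  by (induction j) (auto simp: mat_group_def)

lemma leader_prod_induced_CL:
  "(\<And>i. k < i \<Longrightarrow> i \<le> j \<Longrightarrow> c i \<in> CL i) \<Longrightarrow> leader_prod c k j \<in> induced_CL CL k j"
  by (induction j) (auto 0 4)

lemma leader_prod_decomposition:
  assumes "Gs 0 = {mat 1}"
    and "\<And>k. 1 \<le> k \<Longrightarrow> k \<le> j \<Longrightarrow> coset_leaders (CL k) (Gs k) (Gs (k - 1))"
    and "g \<in> Gs j"
  shows "\<exists>c. (\<forall>i. 1 \<le> i \<and> i \<le> j \<longrightarrow> c i \<in> CL i) \<and> g = leader_prod c 0 j"
  using assms(2,3)
proof (induction j arbitrary: g)
  case 0
  then show ?case using assms(1) by auto
next
  case (Suc j)
  obtain d h where d: "d \<in> CL (Suc j)" "h \<in> Gs j" "g = d ** h"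
    using Suc.prems(1)[of "Suc j"] Suc.prems(2) unfolding coset_leaders_def by auto
  obtain c where c: "\<forall>i. 1 \<le> i \<and> i \<le> j \<longrightarrow> c i \<in> CL i" "h = leader_prod c 0 j"
    using Suc.IH[OF _ d(2)] Suc.prems(1) by auto
  have "leader_prod (c(Suc j := d)) 0 j = leader_prod c 0 j"
    by (rule leader_prod_cong) auto
  then have "g = leader_prod (c(Suc j := d)) 0 (Suc j)" using c d by simp
  moreover have "\<forall>i. 1 \<le> i \<and> i \<le> Suc j \<longrightarrow> (c(Suc j := d)) i \<in> CL i"
    using c d le_Suc_eq by auto
  ultimately show ?case by blast
qed

lemma norm_unitary_diff: "unitary_mat U \<Longrightarrow> norm (U *v x - U *v y) = norm (x - y)"
  by (metis unitary_mat_def matrix_vector_mult_diff_distrib)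

lemma finite_real_set_gap:
  fixes S :: "real set"
  assumes "finite S"
  shows "\<exists>\<delta>>0. \<forall>x\<in>S. \<forall>y\<in>S. x < y \<longrightarrow> x + \<delta> \<le> y"
proof -
  have "finite ((\<lambda>(x, y). y - x) ` (S \<times> S))" using assms by simp
  then obtain \<delta> where "\<delta> > 0" and \<delta>: "\<forall>t \<in> (\<lambda>(x, y). y - x) ` (S \<times> S). t \<noteq> 0 \<longrightarrow> \<delta> \<le> dist 0 t"
    using finite_set_avoid by blast
  have "x + \<delta> \<le> y" if "x \<in> S" "y \<in> S" "x < y" for x y
    using \<delta> that by (force simp: dist_real_def)
  then show ?thesis using \<open>\<delta> > 0\<close> by blast
qed

definition orbit_gap :: "'n::finite cmat set \<Rightarrow> 'n cvec \<Rightarrow> real \<Rightarrow> bool" where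
  "orbit_gap G x0 \<delta> \<longleftrightarrow> (\<forall>u\<in>G. \<forall>v\<in>G. norm (v *v x0 - x0) < norm (u *v x0 - x0) \<longrightarrow>
     norm (v *v x0 - x0) + 2 * \<delta> \<le> norm (u *v x0 - x0))"

lemma finite_orbit_gap:
  assumes "finite G"
  shows "\<exists>\<delta>>0. orbit_gap G x0 \<delta>"
proof -
  obtain \<epsilon> where "\<epsilon> > 0" and "\<forall>x\<in>(\<lambda>u. norm (u *v x0 - x0)) ` G. \<forall>y\<in>(\<lambda>u. norm (u *v x0 - x0)) ` G.
      x < y \<longrightarrow> x + \<epsilon> \<le> y"
    using finite_real_set_gap assms by (metis finite_imageI)
  then have "orbit_gap G x0 (\<epsilon> / 2)" by (simp add: orbit_gap_def)
  then show ?thesis using \<open>\<epsilon> > 0\<close> by (intro exI[of _ "\<epsilon> / 2"]) simp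
qed

lemma unitary_nearer_under_noise:
  assumes "unitary_mat a" "unitary_mat c"
    and "norm (c *v y - x0) + 2 * \<delta> \<le> norm (a *v y - x0)" and "norm (r - y) < \<delta>"
  shows "norm (c *v r - x0) < norm (a *v r - x0)"
proof -
  have "norm (c *v r - x0) \<le> norm (c *v y - x0) + norm (c *v r - c *v y)"
    using norm_triangle_ineq[of "c *v y - x0" "c *v r - c *v y"] by simp
  moreover have "norm (a *v y - x0) \<le> norm (a *v r - x0) + norm (a *v r - a *v y)"
    using norm_triangle_ineq4[of "a *v r - x0" "a *v r - a *v y"] by simp
  ultimately show ?thesis
    using assms by (simp add: norm_unitary_diff)
qed

lemma FR_orbit_gap:
  assumes "mat_group G" "inj_on (\<lambda>g. g *v x0) G" "orbit_gap G x0 \<delta>"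
    and "H \<subseteq> G" "w \<in> G" "w *v x0 \<in> FR H x0" "h \<in> H" "h \<noteq> mat 1"
  shows "norm (w *v x0 - x0) + 2 * \<delta> \<le> norm (h *v (w *v x0) - x0)"
proof -
  have "mat 1 \<in> G" "h ** w \<in> G" using assms unfolding mat_group_def by auto
  then have "h *v x0 \<noteq> mat 1 *v x0"
    using assms(2,4,7,8) by (metis inj_onD subsetD)
  then have "h \<in> H - Stab H x0" using assms(7) by (simp add: Stab_def)
  then have "norm (w *v x0 - x0) < norm ((h ** w) *v x0 - x0)"
    using assms(6) by (simp add: FR_def matrix_vector_mul_assoc)
  then show ?thesis
    using assms(3,5) \<open>h ** w \<in> G\<close> by (simp add: orbit_gap_def matrix_vector_mul_assoc)
qed

lemma minimal_rep_one: "minimal_rep H x0 (mat 1)"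
  unfolding minimal_rep_def FR_def Stab_def by force

lemma minimal_rep_inv_FR:
  assumes "mat_group G" "e \<in> G" "minimal_rep H x0 e"
  shows "matrix_inv e *v x0 \<in> FR H x0"
proof -
  obtain x where "x \<in> FR H x0" "e *v x = x0" using assms(3) unfolding minimal_rep_def by blast
  moreover have "matrix_inv e ** e = mat 1" using mat_group_inv[OF assms(1,2)] by simp
  ultimately show ?thesis by (metis matrix_vector_mul_assoc matrix_vector_mul_lid)
qed

lemma coset_leader_nearest:
  assumes "mat_group G" "\<forall>g\<in>G. unitary_mat g" "inj_on (\<lambda>g. g *v x0) G" "orbit_gap G x0 \<delta>"
    and "mat_subgroup H G" "C \<subseteq> H" "c \<in> C" "a \<in> C" "a \<noteq> c"
    and "w \<in> G" "w *v x0 \<in> FR H x0" "c *v y = w *v x0" "norm (r - y) < \<delta>"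
  shows "norm (c *v r - x0) < norm (a *v r - x0)"
proof -
  have HG: "H \<subseteq> G" and H: "mat_group H" using assms(5) by (auto simp: mat_subgroup_def)
  define h where "h = a ** matrix_inv c"
  have c_inv: "matrix_inv c \<in> H" "matrix_inv c ** c = mat 1"
    using mat_group_inv[OF H] assms(6,7) by auto
  have "h \<in> H" using H c_inv(1) assms(6,8) by (auto simp: mat_group_def h_def)
  have a_eq: "a = h ** c"
    using c_inv(2) by (metis h_def matrix_mul_assoc matrix_mul_rid)
  have "h \<noteq> mat 1" using a_eq assms(9) by auto
  have "norm (c *v y - x0) + 2 * \<delta> \<le> norm (a *v y - x0)"
    using FR_orbit_gap[OF assms(1,3,4) HG assms(10,11) \<open>h \<in> H\<close> \<open>h \<noteq> mat 1\<close>] a_eq assms(12)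
    by (simp add: matrix_vector_mul_assoc[symmetric])
  moreover have "unitary_mat a" "unitary_mat c" using assms(2,6,7,8) HG by auto
  ultimately show ?thesis using unitary_nearer_under_noise assms(13) by blast
qed

lemma dec_step_eqI:
  assumes "d \<in> CL k" and "\<forall>a \<in> CL k. a \<noteq> d \<longrightarrow> norm (d *v r - x0) < norm (a *v r - x0)"
  shows "dec_step CL rk x0 k r = d"
  unfolding dec_step_def
proof (rule the_equality)
  show "d \<in> CL k \<and> (\<forall>a \<in> CL k. norm (d *v r - x0) < norm (a *v r - x0) \<or>
      (norm (d *v r - x0) = norm (a *v r - x0) \<and> rk k d \<le> rk k a))"
    using assms by auto
next
  fix d' assume "d' \<in> CL k \<and> (\<forall>a \<in> CL k. norm (d' *v r - x0) < norm (a *v r - x0) \<or>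
      (norm (d' *v r - x0) = norm (a *v r - x0) \<and> rk k d' \<le> rk k a))"
  then show "d' = d" using assms by force
qed

lemma dec_iter_leader_prod:
  assumes "\<And>k. 1 \<le> k \<Longrightarrow> k \<le> j \<Longrightarrow> dec_step CL rk x0 k (leader_prod c 0 (k - 1) *v r) = c k"
  shows "dec_iter CL rk x0 j r = (leader_prod c 0 j *v r, leader_prod c 0 j)"
  using assms
proof (induction j)
  case (Suc j)
  then have "dec_step CL rk x0 (Suc j) (leader_prod c 0 j *v r) = c (Suc j)" by force
  then show ?case using Suc by (simp add: matrix_vector_mul_assoc Let_def)
qed simp

lemma dec_step_leader_prod:
  assumes "mat_group G" "\<forall>g\<in>G. unitary_mat g" "inj_on (\<lambda>g. g *v x0) G" "orbit_gap G x0 \<delta>"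
    and "mat_subgroup (Gs k) G" "CL k \<subseteq> Gs k"
    and "\<And>i. 1 \<le> i \<Longrightarrow> i \<le> m \<Longrightarrow> c i \<in> CL i" "\<And>i. 1 \<le> i \<Longrightarrow> i \<le> m \<Longrightarrow> CL i \<subseteq> G"
    and "1 \<le> k" "k \<le> m" "minimal_rep (Gs k) x0 (leader_prod c k m)"
    and "norm (r - matrix_inv (leader_prod c 0 m) *v x0) < \<delta>"
  shows "dec_step CL rk x0 k (leader_prod c 0 (k - 1) *v r) = c k"
proof -
  define p e g where "p = leader_prod c 0 (k - 1)" "e = leader_prod c k m" "g = leader_prod c 0 m"
  have "c i \<in> G" if "1 \<le> i" "i \<le> m" for i using assms(7,8) that by blast
  then have "p \<in> G" "e \<in> G" "g \<in> G"
    using assms(10) unfolding p_e_g_def by (auto intro!: leader_prod_mem[OF assms(1)])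
  have "leader_prod c 0 k = c k ** p" using assms(9) by (cases k) (simp_all add: p_e_g_def)
  then have "g = e ** (c k ** p)" using leader_prod_split[OF assms(10), of c] by (simp add: p_e_g_def)
  then have "c k ** p ** matrix_inv g = matrix_inv e"
    using mat_group_inv[OF assms(1)] \<open>e \<in> G\<close> \<open>g \<in> G\<close>
    by (metis matrix_mul_assoc matrix_mul_lid matrix_mul_rid)
  then have y: "c k *v (p *v (matrix_inv g *v x0)) = matrix_inv e *v x0"
    by (metis matrix_vector_mul_assoc)
  have "norm (p *v r - p *v (matrix_inv g *v x0)) < \<delta>"
    using assms(2,12) \<open>p \<in> G\<close> by (simp add: norm_unitary_diff p_e_g_def)
  then have "\<forall>a \<in> CL k. a \<noteq> c k \<longrightarrow> norm (c k *v (p *v r) - x0) < norm (a *v (p *v r) - x0)"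
    using coset_leader_nearest[OF assms(1-6) _ _ _ _ _ y] mat_group_inv[OF assms(1) \<open>e \<in> G\<close>]
      minimal_rep_inv_FR[OF assms(1) \<open>e \<in> G\<close>] assms(7,9-11) p_e_g_def by blast
  then show ?thesis using dec_step_eqI assms(7,9,10) p_e_g_def by blast
qed

theorem mainTheorem5:
  fixes G :: "'n::finite cmat set"
    and x0 :: "'n cvec"
    and Gs :: "nat \<Rightarrow> 'n cmat set"
    and CL :: "nat \<Rightarrow> 'n cmat set"
    and rk :: "nat \<Rightarrow> 'n cmat \<Rightarrow> nat"
    and m :: nat
  assumes "finite G" and "mat_group G" and "\<forall>g\<in>G. unitary_mat g"
    and "norm x0 = 1"
    and "card ((\<lambda>g. g *v x0) ` G) = card G"
    and "Gs 0 = {mat 1}" and "Gs m = G"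
    and "\<forall>k\<le>m. mat_subgroup (Gs k) G"
    and "\<forall>k. 1 \<le> k \<and> k \<le> m \<longrightarrow> Gs (k - 1) \<subset> Gs k"
    and "\<forall>k. 1 \<le> k \<and> k \<le> m \<longrightarrow> coset_leaders (CL k) (Gs k) (Gs (k - 1))"
    and "\<forall>k. 1 \<le> k \<and> k \<le> m \<longrightarrow> inj_on (rk k) (CL k)"
    and "\<forall>k. 1 \<le> k \<and> k < m \<longrightarrow> (\<forall>c \<in> induced_CL CL k m. minimal_rep (Gs k) x0 c)"
  shows "decodes_correctly_with_noise G CL rk x0 m"
proof -
  have inj: "inj_on (\<lambda>g. g *v x0) G" using assms(1,5) by (simp add: inj_on_iff_eq_card)
  obtain \<delta> where "\<delta> > 0" and gap: "orbit_gap G x0 \<delta>" using finite_orbit_gap[OF assms(1)] by blast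
  have CL_sub: "CL k \<subseteq> Gs k" "CL k \<subseteq> G" if "1 \<le> k" "k \<le> m" for k
    using assms(8,10) that by (auto simp: coset_leaders_def mat_subgroup_def) blast
  have "subgroup_decode CL rk x0 m r = g"
    if "g \<in> G" and noise: "norm (r - matrix_inv g *v x0) < \<delta>" for g r
  proof -
    obtain c where c: "\<forall>i. 1 \<le> i \<and> i \<le> m \<longrightarrow> c i \<in> CL i" and g: "g = leader_prod c 0 m"
      using leader_prod_decomposition[of Gs m CL g] assms(6,7,10) \<open>g \<in> G\<close> by auto
    have "minimal_rep (Gs k) x0 (leader_prod c k m)" if "1 \<le> k" "k \<le> m" for k
      using assms(12) leader_prod_induced_CL[of k m c CL] c that
      by (cases "k = m") (auto simp: leader_prod_trivial minimal_rep_one)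
    then have "dec_step CL rk x0 k (leader_prod c 0 (k - 1) *v r) = c k" if "1 \<le> k" "k \<le> m" for k
      using dec_step_leader_prod[OF assms(2,3) inj gap, where Gs = Gs and m = m and c = c]
        assms(8) CL_sub c g noise that by simp
    then have "dec_iter CL rk x0 m r = (leader_prod c 0 m *v r, g)"
      unfolding g by (rule dec_iter_leader_prod)
    then show ?thesis by (simp add: subgroup_decode_def)
  qed
  then show ?thesis using \<open>\<delta> > 0\<close> unfolding decodes_correctly_with_noise_def by blast
qed

end
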